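(* Suppose Assumptions 1 and 4 hold. Let $\beta_E\in\big(0,\tfrac12\min\{\bar\chi,\tfrac1{2d^*}\}\big)$, $\delta>\frac1{2\beta_E}$, and let $\sigma,\gamma,\tau>0$ be such that $\bar\Phi-\delta I$ is positive semidefinite. Then, with respect to the inner product $\langle u,v\rangle_{\bar\Phi}=u^T\bar\Phi v$: (i) $\bar\Phi^{-1}\bar{\mathfrak A}$ is maximally monotone and $\mathcal T_1=(\mathrm{Id}+\bar\Phi^{-1}\bar{\mathfrak A})^{-1}$ is $\tfrac12$-averaged; (ii) $\bar\Phi^{-1}\bar{\mathfrak B}$ is $\delta\beta_E$-cocoercive and $\mathcal T_2=\mathrm{Id}-\bar\Phi^{-1}\bar{\mathfrak B}$ is $\frac1{2\delta\beta_E}$-averaged; (iii) $\mathcal T=\mathcal T_1\circ\mathcal T_2$ is $\frac{2\delta\beta_E}{4\delta\beta_E-1}$-averaged.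
   Context: Same setting as for the partial-decision operators: players $i=1,\dots,N$, $x_i\in\Omega_i\subseteq\mathbb R^{n_i}$, $\Omega=\prod\Omega_i\subseteq\mathbb R^n$, costs $f_i$ defined and $C^1$ in $x_i$ on $\mathbb R^n$, data $A_i\in\mathbb R^{m\times n_i}$, $b_i\in\mathbb R^m$, $X=\Omega\cap\{\sum A_ix_i=\sum b_i\}$. Assumption 1: each $\Omega_i$ closed convex with nonempty interior; $X$ and each $\{x_i\in\Omega_i:(x_i,x_{-i})\in X\}$ have nonempty relative interior; $f_i$ convex in $x_i$. Graph: connected undirected, $N$ nodes, $M$ arbitrarily oriented edges, incidence $V$ ($V_{il}=1$ if $e_l$ points to $i$, $-1$ if starts at $i$, $0$ else), $L=VV^T$, $d^*=\max_iL_{ii}$; $\mathbf V=V\otimes I_m$, $\mathbf L=L\otimes I_n$, $\mathbf A=\mathrm{diag}(A_i)$, $\mathbf b=\mathrm{col}(b_i)$. $\mathbf x=\mathrm{col}(x^{(1)},\dots,x^{(N)})\in\mathbb R^{Nn}$; $\mathcal R_i=[0_{n_i\times n_{<i}}\ I_{n_i}\ 0_{n_i\times n_{>i}}]$, $\mathcal R=\mathrm{diag}(\mathcal R_i)$; $\mathbf F(\mathbf x)=\mathrm{col}(\nabla_{x_i}f_i(x^{(i)}))_i$. Assumption 4: $\langle\mathbf x-\mathbf x',\mathcal R^T\mathbf F(\mathbf x)-\mathcal R^T\mathbf F(\mathbf x')\rangle\ge\bar\chi\|\mathbf F(\mathbf x)-\mathbf F(\mathbf x')\|^2$ for all $\mathbf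 x,\mathbf x'$, $\bar\chi>0$. $\bar{\mathfrak A}(\mathbf W)=\mathrm{col}(-\mathbf V\mathbf z-\mathbf A\mathcal R\mathbf x,\mathbf V^T\Lambda,\mathcal R^TN_\Omega(\mathcal R\mathbf x)+\mathcal R^T\mathbf A^T\Lambda)$, $\bar{\mathfrak B}(\mathbf W)=\mathrm{col}(\mathbf b,\mathbf 0,\mathcal R^T\mathbf F(\mathbf x)+\mathbf L\mathbf x)$, $\bar\Phi=\begin{pmatrix}\sigma^{-1}I&\mathbf V&\mathbf A\mathcal R\\ \mathbf V^T&\gamma^{-1}I&0\\ \mathcal R^T\mathbf A^T&0&\tau^{-1}I\end{pmatrix}$. $S$ is $\alpha$-averaged if $S=(1-\alpha)\mathrm{Id}+\alpha R$ with $R$ nonexpansive; $\beta$-cocoercive means $\langle u-v,Su-Sv\rangle\ge\beta\|Su-Sv\|^2$. *)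

theory Defs
  imports "HOL-Analysis.Analysis"
begin

text \<open>Coordinates of R^n are the finite type 'j; own j is the player owning coordinate j.
  R^{n_i} is identified with the coordinate subspace blk own i.\<close>

definition blk :: "('j::finite \<Rightarrow> 'p) \<Rightarrow> 'p \<Rightarrow> (real^'j) set" where
  "blk own i = {v. \<forall>j. own j \<noteq> i \<longrightarrow> v $ j = 0}"

definition proj :: "('j::finite \<Rightarrow> 'p) \<Rightarrow> 'p \<Rightarrow> real^'j \<Rightarrow> real^'j" where
  "proj own i y = (\<chi> j. if own j = i then y $ j else 0)"

text \<open>(u_i, x_{-i}): replace block i of x by (block i of) u.\<close>
definition replace_blk :: "('j::finite \<Rightarrow> 'p) \<Rightarrow> 'p \<Rightarrow> real^'j \<Rightarrow> real^'j \<Rightarrow> real^'j" where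
  "replace_blk own i x u = (\<chi> j. if own j = i then u $ j else x $ j)"

text \<open>Omega = product of the Omega_i.\<close>
definition OmegaSet :: "('j::finite \<Rightarrow> 'p) \<Rightarrow> ('p \<Rightarrow> (real^'j) set) \<Rightarrow> (real^'j) set" where
  "OmegaSet own Omi = {y. \<forall>i. proj own i y \<in> Omi i}"

text \<open>X = Omega \<inter> {sum A_i x_i = sum b_i}; A is the m x n matrix [A_1 ... A_N].\<close>
definition Xset :: "('j::finite \<Rightarrow> 'p::finite) \<Rightarrow> ('p \<Rightarrow> (real^'j) set) \<Rightarrow> real^'j^'c::finite
     \<Rightarrow> real^'c^'p \<Rightarrow> (real^'j) set" where
  "Xset own Omi A b = {y \<in> OmegaSet own Omi. A *v y = (\<Sum>i\<in>UNIV. b $ i)}"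

definition slice :: "('j::finite \<Rightarrow> 'p::finite) \<Rightarrow> ('p \<Rightarrow> (real^'j) set) \<Rightarrow> real^'j^'c::finite
     \<Rightarrow> real^'c^'p \<Rightarrow> 'p \<Rightarrow> real^'j \<Rightarrow> (real^'j) set" where
  "slice own Omi A b i x = {u \<in> Omi i. replace_blk own i x u \<in> Xset own Omi A b}"

definition normal_cone :: "'a::real_inner set \<Rightarrow> 'a \<Rightarrow> 'a set" where
  "normal_cone S y = (if y \<in> S then {g. \<forall>y'\<in>S. inner g (y' - y) \<le> 0} else {})"

text \<open>R : R^{Nn} -> R^n, picks x_i^{(i)}; RT is its transpose.\<close>
definition Rop :: "('j::finite \<Rightarrow> 'p::finite) \<Rightarrow> real^'j^'p \<Rightarrow> real^'j" where
  "Rop own x = (\<chi> j. x $ (own j) $ j)"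

definition RT :: "('j::finite \<Rightarrow> 'p::finite) \<Rightarrow> real^'j \<Rightarrow> real^'j^'p" where
  "RT own y = (\<chi> i. \<chi> j. if own j = i then y $ j else 0)"

text \<open>bold A = diag(A_i) : R^n -> R^{Nm}, and its transpose.\<close>
definition Aop :: "('j::finite \<Rightarrow> 'p::finite) \<Rightarrow> real^'j^'c::finite \<Rightarrow> real^'j \<Rightarrow> real^'c^'p" where
  "Aop own A y = (\<chi> i. \<chi> c. \<Sum>j\<in>{j. own j = i}. A $ c $ j * y $ j)"

definition AT :: "('j::finite \<Rightarrow> 'p::finite) \<Rightarrow> real^'j^'c::finite \<Rightarrow> real^'c^'p \<Rightarrow> real^'j" where
  "AT own A lam = (\<chi> j. \<Sum>c\<in>UNIV. A $ c $ j * lam $ (own j) $ c)"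

text \<open>F(x) = col(grad_{x_i} f_i(x^{(i)})), given the partial gradients gf i.\<close>
definition Fop :: "('j::finite \<Rightarrow> 'p::finite) \<Rightarrow> ('p \<Rightarrow> real^'j \<Rightarrow> real^'j) \<Rightarrow> real^'j^'p \<Rightarrow> real^'j" where
  "Fop own gf x = (\<chi> j. gf (own j) (x $ (own j)) $ j)"

text \<open>Edge e is oriented from tle e to hde e.\<close>
definition incid :: "('e \<Rightarrow> 'p) \<Rightarrow> ('e \<Rightarrow> 'p) \<Rightarrow> 'p \<Rightarrow> 'e \<Rightarrow> real" where
  "incid tle hde i e = (if hde e = i then 1 else if tle e = i then -1 else 0)"

definition Lap :: "('p \<Rightarrow> 'e::finite \<Rightarrow> real) \<Rightarrow> 'p \<Rightarrow> 'p \<Rightarrow> real" where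
  "Lap V i k = (\<Sum>e\<in>UNIV. V i e * V k e)"

definition dstar :: "('p::finite \<Rightarrow> 'e::finite \<Rightarrow> real) \<Rightarrow> real" where
  "dstar V = Max (range (\<lambda>i. Lap V i i))"

text \<open>bold V = V (x) I_m and its transpose; bold L = L (x) I_n.\<close>
definition Vop :: "('p::finite \<Rightarrow> 'e::finite \<Rightarrow> real) \<Rightarrow> real^'c^'e \<Rightarrow> real^'c^'p" where
  "Vop V z = (\<chi> i. \<Sum>e\<in>UNIV. V i e *\<^sub>R z $ e)"

definition VT :: "('p::finite \<Rightarrow> 'e::finite \<Rightarrow> real) \<Rightarrow> real^'c^'p \<Rightarrow> real^'c^'e" where
  "VT V lam = (\<chi> e. \<Sum>i\<in>UNIV. V i e *\<^sub>R lam $ i)"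

definition Lop :: "('p::finite \<Rightarrow> 'e::finite \<Rightarrow> real) \<Rightarrow> real^'j^'p \<Rightarrow> real^'j^'p" where
  "Lop V x = (\<chi> i. \<Sum>k\<in>UNIV. Lap V i k *\<^sub>R x $ k)"

definition connected_graph :: "('e \<Rightarrow> 'p) \<Rightarrow> ('e \<Rightarrow> 'p) \<Rightarrow> bool" where
  "connected_graph tle hde =
     (\<forall>i k. (i, k) \<in> ({(tle e, hde e) | e. True} \<union> {(hde e, tle e) | e. True})\<^sup>*)"

definition frakA :: "('j::finite \<Rightarrow> 'p::finite) \<Rightarrow> real^'j^'c::finite \<Rightarrow> ('p \<Rightarrow> 'e::finite \<Rightarrow> real)
    \<Rightarrow> (real^'j) set \<Rightarrow> (real^'c^'p) \<times> (real^'c^'e) \<times> (real^'j^'p)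
    \<Rightarrow> ((real^'c^'p) \<times> (real^'c^'e) \<times> (real^'j^'p)) set" where
  "frakA own A V Om W = (case W of (lam, z, x) \<Rightarrow>
     {(- Vop V z - Aop own A (Rop own x), VT V lam, RT own g + RT own (AT own A lam)) | g.
        g \<in> normal_cone Om (Rop own x)})"

definition frakB :: "('j::finite \<Rightarrow> 'p::finite) \<Rightarrow> ('p \<Rightarrow> real^'j \<Rightarrow> real^'j) \<Rightarrow> ('p \<Rightarrow> 'e::finite \<Rightarrow> real)
    \<Rightarrow> real^'c::finite^'p \<Rightarrow> (real^'c^'p) \<times> (real^'c^'e) \<times> (real^'j^'p)
    \<Rightarrow> (real^'c^'p) \<times> (real^'c^'e) \<times> (real^'j^'p)" where
  "frakB own gf V b W = (case W of (lam, z, x) \<Rightarrow> (b, 0, RT own (Fop own gf x) + Lop V x))"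

definition PhiOp :: "real \<Rightarrow> real \<Rightarrow> real \<Rightarrow> ('j::finite \<Rightarrow> 'p::finite) \<Rightarrow> real^'j^'c::finite
    \<Rightarrow> ('p \<Rightarrow> 'e::finite \<Rightarrow> real) \<Rightarrow> (real^'c^'p) \<times> (real^'c^'e) \<times> (real^'j^'p)
    \<Rightarrow> (real^'c^'p) \<times> (real^'c^'e) \<times> (real^'j^'p)" where
  "PhiOp sig gam tau own A V W = (case W of (lam, z, x) \<Rightarrow>
     ((1/sig) *\<^sub>R lam + Vop V z + Aop own A (Rop own x),
      VT V lam + (1/gam) *\<^sub>R z,
      RT own (AT own A lam) + (1/tau) *\<^sub>R x))"

definition psd :: "('a::real_inner \<Rightarrow> 'a) \<Rightarrow> bool" where
  "psd M = (\<forall>w. 0 \<le> inner w (M w))"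

definition pinner :: "('a::real_inner \<Rightarrow> 'a) \<Rightarrow> 'a \<Rightarrow> 'a \<Rightarrow> real" where
  "pinner P u v = inner u (P v)"

definition pnorm :: "('a::real_inner \<Rightarrow> 'a) \<Rightarrow> 'a \<Rightarrow> real" where
  "pnorm P u = sqrt (pinner P u u)"

definition p_monotone :: "('a::real_inner \<Rightarrow> 'a) \<Rightarrow> ('a \<Rightarrow> 'a set) \<Rightarrow> bool" where
  "p_monotone P S = (\<forall>u v a b. a \<in> S u \<longrightarrow> b \<in> S v \<longrightarrow> 0 \<le> pinner P (u - v) (a - b))"

definition p_max_monotone :: "('a::real_inner \<Rightarrow> 'a) \<Rightarrow> ('a \<Rightarrow> 'a set) \<Rightarrow> bool" where
  "p_max_monotone P S = (p_monotone P S \<and>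
     (\<forall>u a. (\<forall>v b. b \<in> S v \<longrightarrow> 0 \<le> pinner P (u - v) (a - b)) \<longrightarrow> a \<in> S u))"

definition p_nonexpansive :: "('a::real_inner \<Rightarrow> 'a) \<Rightarrow> ('a \<Rightarrow> 'a) \<Rightarrow> bool" where
  "p_nonexpansive P R = (\<forall>u v. pnorm P (R u - R v) \<le> pnorm P (u - v))"

definition p_averaged :: "('a::real_inner \<Rightarrow> 'a) \<Rightarrow> real \<Rightarrow> ('a \<Rightarrow> 'a) \<Rightarrow> bool" where
  "p_averaged P \<alpha> T = (\<exists>R. p_nonexpansive P R \<and> (\<forall>u. T u = (1 - \<alpha>) *\<^sub>R u + \<alpha> *\<^sub>R R u))"

definition p_cocoercive :: "('a::real_inner \<Rightarrow> 'a) \<Rightarrow> real \<Rightarrow> ('a \<Rightarrow> 'a) \<Rightarrow> bool" where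
  "p_cocoercive P \<beta> T = (\<forall>u v. \<beta> * (pnorm P (T u - T v))\<^sup>2 \<le> pinner P (u - v) (T u - T v))"

text \<open>(Id + S)^{-1} as a set-valued map.\<close>
definition resolvent :: "('a::real_vector \<Rightarrow> 'a set) \<Rightarrow> 'a \<Rightarrow> 'a set" where
  "resolvent S u = {w. u \<in> (\<lambda>a. w + a) ` S w}"

end

theory Submission
  imports Defs
begin

text \<open>
  \<open>\<Phi>\<close> is self-adjoint and \<open>\<delta>\<close>-coercive, so \<open>\<langle>u, v\<rangle>\<^sub>\<Phi>\<close> is an inner product and
  \<open>\<Phi>\<^sup>-\<^sup>1\<close> turns monotonicity in the standard metric into monotonicity in the \<open>\<Phi>\<close>-metric.
  The operator \<open>\<frak>A\<close> is monotone because its skew-symmetric coupling terms cancel and the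
  normal cone is monotone; its \<open>\<Phi>\<close>-resolvent is computed explicitly (a projection onto \<open>\<Omega>\<close>),
  which gives maximality and single-valuedness, hence firm nonexpansiveness.
  In \<open>\<frak>B\<close> only the block \<open>\<R>\<^sup>TF + L\<close> varies; Assumption 4 and \<open>L = V V\<^sup>T\<close> with
  \<open>\<parallel>V\<parallel>\<^sup>2 \<le> 2d\<^sup>*\<close> make it \<open>\<beta>\<^sub>E\<close>-cocoercive, and \<open>\<Phi> \<ge> \<delta>I\<close> upgrades this to
  \<open>\<delta>\<beta>\<^sub>E\<close>-cocoercivity of \<open>\<Phi>\<^sup>-\<^sup>1\<frak>B\<close>. The averagedness claims are then the standard
  facts on firmly nonexpansive maps, cocoercive operators and compositions of averaged maps.
\<close>

lemma linear_Vop: "linear (Vop V)"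
  by (rule linearI) (auto simp: Vop_def vec_eq_iff sum.distrib scaleR_add_right scaleR_sum_right mult_ac)

lemma linear_VT: "linear (VT V)"
  by (rule linearI) (auto simp: VT_def vec_eq_iff sum.distrib scaleR_add_right scaleR_sum_right mult_ac)

lemma linear_Rop: "linear (Rop own)"
  by (rule linearI) (auto simp: Rop_def vec_eq_iff)

lemma linear_RT: "linear (RT own)"
  by (rule linearI) (auto simp: RT_def vec_eq_iff)

lemma linear_Aop: "linear (Aop own A)"
  by (rule linearI) (auto simp: Aop_def vec_eq_iff sum.distrib algebra_simps sum_distrib_left)

lemma linear_AT: "linear (AT own A)"
  by (rule linearI) (auto simp: AT_def vec_eq_iff sum.distrib algebra_simps sum_distrib_left)

lemma linear_proj: "linear (proj own i)"
  by (rule linearI) (auto simp: proj_def vec_eq_iff)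

lemmas block_operators_linear =
  linear_add[OF linear_Vop] linear_diff[OF linear_Vop] linear_cmul[OF linear_Vop] linear_neg[OF linear_Vop]
  linear_add[OF linear_VT] linear_diff[OF linear_VT] linear_cmul[OF linear_VT] linear_neg[OF linear_VT]
  linear_add[OF linear_Rop] linear_diff[OF linear_Rop] linear_cmul[OF linear_Rop] linear_neg[OF linear_Rop]
  linear_add[OF linear_RT] linear_diff[OF linear_RT] linear_cmul[OF linear_RT] linear_neg[OF linear_RT]
  linear_add[OF linear_Aop] linear_diff[OF linear_Aop] linear_cmul[OF linear_Aop] linear_neg[OF linear_Aop]
  linear_add[OF linear_AT] linear_diff[OF linear_AT] linear_cmul[OF linear_AT] linear_neg[OF linear_AT]

lemma RT_adjoint: "inner (RT own v) w = inner v (Rop own w)"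
proof -
  have "inner (RT own v) w = (\<Sum>i\<in>UNIV. \<Sum>j\<in>UNIV. (if own j = i then v$j * w$i$j else 0))"
    unfolding inner_vec_def RT_def by (intro sum.cong refl) (simp add: inner_real_def)
  also have "\<dots> = (\<Sum>j\<in>UNIV. \<Sum>i\<in>UNIV. (if own j = i then v$j * w$i$j else 0))"
    by (rule sum.swap)
  also have "\<dots> = inner v (Rop own w)"
    unfolding inner_vec_def Rop_def by (intro sum.cong refl) (simp add: sum.delta)
  finally show ?thesis .
qed

lemma Vop_adjoint:
  fixes z :: "real^'c::finite^'e::finite" and lam :: "real^'c^'p::finite"
  shows "inner (Vop V z) lam = inner z (VT V lam)"
proof -
  have "inner (Vop V z) lam = (\<Sum>i\<in>UNIV. \<Sum>e\<in>UNIV. V i e * inner (z$e) (lam$i))"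
    unfolding inner_vec_def[where 'a="real^'c" and 'b='p] Vop_def by (simp add: inner_sum_left)
  also have "\<dots> = (\<Sum>e\<in>UNIV. \<Sum>i\<in>UNIV. V i e * inner (z$e) (lam$i))"
    by (rule sum.swap)
  also have "\<dots> = inner z (VT V lam)"
    unfolding inner_vec_def[where 'a="real^'c" and 'b='e] VT_def by (simp add: inner_sum_right)
  finally show ?thesis .
qed

lemma Aop_adjoint: "inner (Aop own A y) lam = inner y (AT own A lam)"
proof -
  have "inner (Aop own A y) lam
      = (\<Sum>i\<in>UNIV. \<Sum>c\<in>UNIV. \<Sum>j\<in>UNIV. (if own j = i then A$c$j * y$j * lam$i$c else 0))"
    unfolding inner_vec_def Aop_def
    by (intro sum.cong refl)
       (auto simp add: inner_real_def sum_distrib_right sum.If_cases intro!: sum.cong)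
  also have "\<dots> = (\<Sum>i\<in>UNIV. \<Sum>j\<in>UNIV. \<Sum>c\<in>UNIV. (if own j = i then A$c$j * y$j * lam$i$c else 0))"
    by (intro sum.cong refl sum.swap)
  also have "\<dots> = (\<Sum>j\<in>UNIV. \<Sum>i\<in>UNIV. \<Sum>c\<in>UNIV. (if own j = i then A$c$j * y$j * lam$i$c else 0))"
    by (rule sum.swap)
  also have "\<dots> = (\<Sum>j\<in>UNIV. \<Sum>c\<in>UNIV. \<Sum>i\<in>UNIV. (if own j = i then A$c$j * y$j * lam$i$c else 0))"
    by (intro sum.cong refl sum.swap)
  also have "\<dots> = inner y (AT own A lam)"
    unfolding inner_vec_def AT_def
    by (intro sum.cong refl) (simp add: if_distrib sum.delta sum_distrib_left mult_ac cong: if_cong)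
  finally show ?thesis .
qed

lemma Aop_Rop_adjoint: "inner l (Aop own A (Rop own x)) = inner (RT own (AT own A l)) x"
  by (metis Aop_adjoint RT_adjoint inner_commute)

lemma Rop_RT: "Rop own (RT own v) = v"
  by (simp add: Rop_def RT_def vec_eq_iff)

lemma Lop_eq_Vop_VT: "Lop V x = Vop V (VT V x)"
proof -
  have "Lop V x $ i = Vop V (VT V x) $ i" for i
  proof -
    have "Lop V x $ i = (\<Sum>k\<in>UNIV. \<Sum>e\<in>UNIV. (V i e * V k e) *\<^sub>R x$k)"
      by (simp add: Lop_def Lap_def scaleR_sum_left)
    also have "\<dots> = (\<Sum>e\<in>UNIV. \<Sum>k\<in>UNIV. (V i e * V k e) *\<^sub>R x$k)"
      by (rule sum.swap)
    also have "\<dots> = Vop V (VT V x) $ i"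
      by (simp add: Vop_def VT_def scaleR_sum_right)
    finally show ?thesis .
  qed
  then show ?thesis by (simp add: vec_eq_iff)
qed

lemma abs_incid_idem: "\<bar>incid tle hde i e\<bar> * \<bar>incid tle hde i e\<bar> = \<bar>incid tle hde i e\<bar>"
  by (simp add: incid_def)

lemma sum_abs_incid_column:
  fixes tle hde :: "'e \<Rightarrow> 'p::finite"
  assumes "tle e \<noteq> hde e"
  shows "(\<Sum>i\<in>UNIV. \<bar>incid tle hde i e\<bar>) = 2"
proof -
  have "(\<Sum>i\<in>UNIV. \<bar>incid tle hde i e\<bar>)
      = (\<Sum>i\<in>UNIV. (if i = hde e then 1 else 0) + (if i = tle e then 1 else 0))"
    using assms by (intro sum.cong refl) (auto simp: incid_def)
  also have "\<dots> = 2" by (simp add: sum.distrib)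
  finally show ?thesis .
qed

lemma Lap_incid_diag: "Lap (incid tle hde) i i = (\<Sum>e\<in>UNIV. \<bar>incid tle hde i e\<bar>)"
  unfolding Lap_def by (intro sum.cong refl) (simp add: incid_def)

lemma Lap_le_dstar: "Lap V i i \<le> dstar V"
  unfolding dstar_def by (rule Max_ge) auto

lemma norm_sum_scaleR_sq_le:
  fixes y :: "'a::real_inner^'e::finite"
  assumes "\<And>e. \<bar>w e\<bar> * \<bar>w e\<bar> = \<bar>w e\<bar>"
  shows "(norm (\<Sum>e\<in>UNIV. w e *\<^sub>R y$e))\<^sup>2 \<le> (\<Sum>e\<in>UNIV. \<bar>w e\<bar>) * (\<Sum>e\<in>UNIV. \<bar>w e\<bar> * (norm (y$e))\<^sup>2)"
proof -
  have "norm (\<Sum>e\<in>UNIV. w e *\<^sub>R y$e) \<le> (\<Sum>e\<in>UNIV. \<bar>w e\<bar> * norm (y$e))"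
    by (rule order_trans[OF norm_sum]) simp
  hence "(norm (\<Sum>e\<in>UNIV. w e *\<^sub>R y$e))\<^sup>2 \<le> (\<Sum>e\<in>UNIV. \<bar>w e\<bar> * norm (y$e))\<^sup>2"
    by (rule power_mono) simp
  also have "(\<Sum>e\<in>UNIV. \<bar>w e\<bar> * norm (y$e)) = (\<Sum>e\<in>UNIV. \<bar>w e\<bar> * (\<bar>w e\<bar> * norm (y$e)))"
    using assms by (simp add: mult.assoc[symmetric])
  also have "(\<dots>)\<^sup>2 \<le> (\<Sum>e\<in>UNIV. \<bar>w e\<bar>\<^sup>2) * (\<Sum>e\<in>UNIV. (\<bar>w e\<bar> * norm (y$e))\<^sup>2)"
    by (rule Cauchy_Schwarz_ineq_sum)
  also have "\<dots> = (\<Sum>e\<in>UNIV. \<bar>w e\<bar>) * (\<Sum>e\<in>UNIV. \<bar>w e\<bar> * (norm (y$e))\<^sup>2)"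
  proof -
    have "\<bar>w e\<bar>\<^sup>2 = \<bar>w e\<bar>" "(\<bar>w e\<bar> * norm (y$e))\<^sup>2 = \<bar>w e\<bar> * (norm (y$e))\<^sup>2" for e
      using assms[of e] by (simp_all only: power_mult_distrib power2_eq_square[of "\<bar>w e\<bar>"])
    then show ?thesis by simp
  qed
  finally show ?thesis .
qed

lemma inner_vec_self: "inner (v::'a::real_inner^'b::finite) v = (\<Sum>i\<in>UNIV. (norm (v$i))\<^sup>2)"
  by (simp add: inner_vec_def power2_norm_eq_inner)

text \<open>Row sums of \<open>|V|\<close> are the degrees \<open>\<le> d\<^sup>*\<close>, column sums are \<open>2\<close> (no self-loops).\<close>

lemma inner_Vop_incid_le:
  fixes tle hde :: "'e::finite \<Rightarrow> 'p::finite" and y :: "real^'j::finite^'e"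
  assumes no_loops: "\<forall>e. tle e \<noteq> hde e"
  shows "inner (Vop (incid tle hde) y) (Vop (incid tle hde) y) \<le> 2 * dstar (incid tle hde) * inner y y"
proof -
  let ?V = "incid tle hde"
  let ?w = "\<lambda>i e. \<bar>?V i e\<bar> * (norm (y$e))\<^sup>2"
  have "inner (Vop ?V y) (Vop ?V y) = (\<Sum>i\<in>UNIV. (norm (\<Sum>e\<in>UNIV. ?V i e *\<^sub>R y$e))\<^sup>2)"
    by (simp add: inner_vec_self Vop_def)
  also have "\<dots> \<le> (\<Sum>i\<in>UNIV. dstar ?V * (\<Sum>e\<in>UNIV. ?w i e))"
  proof (rule sum_mono)
    fix i
    have "(norm (\<Sum>e\<in>UNIV. ?V i e *\<^sub>R y$e))\<^sup>2 \<le> (\<Sum>e\<in>UNIV. \<bar>?V i e\<bar>) * (\<Sum>e\<in>UNIV. ?w i e)"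
      by (rule norm_sum_scaleR_sq_le) (rule abs_incid_idem)
    also have "\<dots> \<le> dstar ?V * (\<Sum>e\<in>UNIV. ?w i e)"
      by (rule mult_right_mono)
         (use Lap_le_dstar[of ?V i] Lap_incid_diag[of tle hde i] in \<open>auto intro: sum_nonneg\<close>)
    finally show "(norm (\<Sum>e\<in>UNIV. ?V i e *\<^sub>R y$e))\<^sup>2 \<le> dstar ?V * (\<Sum>e\<in>UNIV. ?w i e)" .
  qed
  also have "\<dots> = dstar ?V * (\<Sum>i\<in>UNIV. \<Sum>e\<in>UNIV. ?w i e)"
    by (simp add: sum_distrib_left)
  also have "(\<Sum>i\<in>UNIV. \<Sum>e\<in>UNIV. ?w i e) = (\<Sum>e\<in>UNIV. \<Sum>i\<in>UNIV. ?w i e)"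
    by (rule sum.swap)
  also have "\<dots> = (\<Sum>e\<in>UNIV. 2 * (norm (y$e))\<^sup>2)"
    by (simp add: sum_distrib_right[symmetric] sum_abs_incid_column no_loops)
  also have "\<dots> = 2 * inner y y"
    by (simp add: inner_vec_self sum_distrib_left)
  finally show ?thesis by (simp add: mult_ac)
qed

lemma step_size_bounds:
  fixes betaE chibar d :: real
  assumes "0 < betaE" and "betaE < 1/2 * min chibar (1 / (2 * d))"
  shows "2 * betaE \<le> chibar" and "4 * betaE * d \<le> 1"
proof -
  show "2 * betaE \<le> chibar" using assms by simp
  have "d > 0"
  proof (rule ccontr)
    assume "\<not> d > 0"
    then have "min chibar (1 / (2 * d)) \<le> 0"
      by (simp add: divide_nonpos_nonneg min.coboundedI2)
    then show False using assms by simp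
  qed
  moreover have "betaE < 1 / (4 * d)" using assms by simp
  ultimately show "4 * betaE * d \<le> 1" by (simp add: field_simps)
qed

lemma RT_Fop_Lop_cocoercive:
  fixes own :: "'j::finite \<Rightarrow> 'p::finite" and tle hde :: "'e::finite \<Rightarrow> 'p"
    and gf :: "'p \<Rightarrow> real^'j \<Rightarrow> real^'j" and x x' :: "real^'j^'p"
  assumes no_loops: "\<forall>e. tle e \<noteq> hde e"
    and asm4: "\<forall>x x'. chibar * (norm (Fop own gf x - Fop own gf x'))\<^sup>2
                   \<le> inner (x - x') (RT own (Fop own gf x) - RT own (Fop own gf x'))"
    and "0 < betaE" and "2 * betaE \<le> chibar" and "4 * betaE * dstar (incid tle hde) \<le> 1"
  defines "D \<equiv> (RT own (Fop own gf x) + Lop (incid tle hde) x) - (RT own (Fop own gf x') + Lop (incid tle hde) x')"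
  shows "betaE * inner D D \<le> inner (x - x') D"
proof -
  let ?V = "incid tle hde"
  define dF where "dF = Fop own gf x - Fop own gf x'"
  define y where "y = VT ?V (x - x')"
  define a where "a = RT own dF"
  define b where "b = Vop ?V y"
  have D_eq: "D = a + b"
    unfolding D_def a_def b_def y_def dF_def Lop_eq_Vop_VT by (simp add: block_operators_linear)
  have aa: "inner a a = (norm dF)\<^sup>2"
    unfolding a_def by (simp add: RT_adjoint Rop_RT power2_norm_eq_inner)
  have bb: "inner b b \<le> 2 * dstar ?V * inner y y"
    unfolding b_def by (rule inner_Vop_incid_le[OF no_loops])
  have xa: "chibar * (norm dF)\<^sup>2 \<le> inner (x - x') a"
    using asm4 unfolding a_def dF_def by (simp add: block_operators_linear)
  have xb: "inner (x - x') b = inner y y"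
    unfolding b_def y_def by (subst inner_commute) (rule Vop_adjoint)
  have DD: "inner D D \<le> 2 * inner a a + 2 * inner b b"
  proof -
    have "0 \<le> inner (a - b) (a - b)" by simp
    then show ?thesis unfolding D_eq by (simp add: inner_add inner_diff inner_commute)
  qed
  have "betaE * inner D D \<le> betaE * (2 * inner a a + 2 * inner b b)"
    using DD \<open>0 < betaE\<close> by (simp add: mult_left_mono)
  also have "\<dots> \<le> 2 * betaE * (norm dF)\<^sup>2 + 4 * betaE * dstar ?V * inner y y"
    using bb \<open>0 < betaE\<close> aa by (simp add: algebra_simps)
  also have "\<dots> \<le> chibar * (norm dF)\<^sup>2 + 1 * inner y y"
    by (intro add_mono mult_right_mono assms(4,5)) simp_all
  also have "\<dots> \<le> inner (x - x') D"
    using xa xb unfolding D_eq by (simp add: inner_add_right)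
  finally show ?thesis .
qed

lemma frakB_cocoercive:
  fixes own :: "'j::finite \<Rightarrow> 'p::finite" and tle hde :: "'e::finite \<Rightarrow> 'p"
    and gf :: "'p \<Rightarrow> real^'j \<Rightarrow> real^'j" and b :: "real^'c::finite^'p"
  assumes "\<forall>e. tle e \<noteq> hde e"
    and "\<forall>x x'. chibar * (norm (Fop own gf x - Fop own gf x'))\<^sup>2
                   \<le> inner (x - x') (RT own (Fop own gf x) - RT own (Fop own gf x'))"
    and "0 < betaE" and "2 * betaE \<le> chibar" and "4 * betaE * dstar (incid tle hde) \<le> 1"
  shows "betaE * inner (frakB own gf (incid tle hde) b W - frakB own gf (incid tle hde) b W')
                       (frakB own gf (incid tle hde) b W - frakB own gf (incid tle hde) b W')
         \<le> inner (W - W') (frakB own gf (incid tle hde) b W - frakB own gf (incid tle hde) b W')"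
proof -
  obtain l z x where W: "W = (l, z, x)" by (cases W) auto
  obtain l' z' x' where W': "W' = (l', z', x')" by (cases W') auto
  show ?thesis
    using RT_Fop_Lop_cocoercive[OF assms, of x x'] by (simp add: W W' frakB_def)
qed

definition p_firmly_nonexpansive :: "('a::real_inner \<Rightarrow> 'a) \<Rightarrow> ('a \<Rightarrow> 'a) \<Rightarrow> bool" where
  "p_firmly_nonexpansive P T = (\<forall>u v. pinner P (T u - T v) (T u - T v) \<le> pinner P (u - v) (T u - T v))"

text \<open>The algebraic core of the composition rule for averaged maps. With \<open>x = u - v\<close>,
  \<open>y = T\<^sub>2u - T\<^sub>2v\<close>, \<open>z = T\<^sub>1(T\<^sub>2u) - T\<^sub>1(T\<^sub>2v)\<close> and \<open>xy = \<langle>x, y\<rangle>\<close> etc., the hypotheses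
  say that \<open>T\<^sub>1\<close> is firmly nonexpansive, that \<open>T\<^sub>2\<close> is \<open>1/(2K)\<close>-averaged, and that
  \<open>\<parallel>(2K-1)(x-y) - (y-z)\<parallel>\<^sup>2 \<ge> 0\<close>.\<close>

lemma averaged_composition_inequality:
  fixes xx yy zz xy xz yz K :: real
  assumes K: "K > 1/2"
    and firm: "zz \<le> yz"
    and avg: "yy - 2*(1 - 1/(2*K))*xy + (1 - 2*(1/(2*K)))*xx \<le> 0"
    and sq: "0 \<le> (2*K-1)^2*(xx - 2*xy + yy) - 2*(2*K-1)*(xy - xz - yy + yz) + (yy - 2*yz + zz)"
  shows "zz - 2*(1 - 2*K/(4*K-1))*xz + (1 - 2*(2*K/(4*K-1)))*xx \<le> 0"
proof -
  have K0: "K > 0" "4*K - 1 > 0" using K by auto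
  define k where "k = (2*K-1)/(2*K)"
  define c where "c = 2*K/(4*K-1)"
  define G where "G = zz + k*(xx - 2*xz + zz) - xx"
  define a where "a = 2*K*(yy - 2*(1 - 1/(2*K))*xy + (1 - 2*(1/(2*K)))*xx)"
  define q where "q = ((2*K-1)^2*(xx - 2*xy + yy) - 2*(2*K-1)*(xy - xz - yy + yz) + (yy - 2*yz + zz))/(2*K)"
  have "G = 2*(zz - yz) + a - q"
    unfolding G_def k_def a_def q_def using K0 by (simp add: field_simps power2_eq_square)
  moreover have "a \<le> 0" unfolding a_def using avg K0 by (simp add: mult_nonneg_nonpos)
  moreover have "0 \<le> q" unfolding q_def using sq K0 by simp
  ultimately have G_nonpos: "G \<le> 0" using firm by (smt (verit))
  have e1: "c * (1 + k) = 1" and e2: "c * k = 1 - c" and e3: "c * (k - 1) = 1 - 2*c"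
    unfolding c_def k_def using K0 by (simp_all add: field_simps)
  have "c * G = (c * (1 + k)) * zz - 2 * (c * k) * xz + (c * (k - 1)) * xx"
    unfolding G_def by (simp add: algebra_simps)
  then have "zz - 2*(1 - c)*xz + (1 - 2*c)*xx = c * G"
    unfolding e1 e2 e3 by simp
  moreover have "0 \<le> c" unfolding c_def using K0 by simp
  ultimately have "zz - 2*(1 - c)*xz + (1 - 2*c)*xx \<le> 0"
    using G_nonpos by (simp add: mult_nonneg_nonpos)
  then show ?thesis unfolding c_def .
qed

locale selfadjoint_coercive =
  fixes P :: "'a::euclidean_space \<Rightarrow> 'a" and dl :: real
  assumes lin: "linear P"
    and selfadjoint: "\<And>u v. inner u (P v) = inner (P u) v"
    and dl_pos: "dl > 0"
    and coercive: "\<And>w. dl * inner w w \<le> inner w (P w)"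
begin

lemma pinner_diff_left[simp]: "pinner P (a - b) c = pinner P a c - pinner P b c"
  by (simp add: pinner_def inner_diff_left)
lemma pinner_add_left[simp]: "pinner P (a + b) c = pinner P a c + pinner P b c"
  by (simp add: pinner_def inner_add_left)
lemma pinner_scaleR_left[simp]: "pinner P (r *\<^sub>R a) c = r * pinner P a c"
  by (simp add: pinner_def)
lemma pinner_diff_right[simp]: "pinner P c (a - b) = pinner P c a - pinner P c b"
  by (simp add: pinner_def linear_diff[OF lin] inner_diff_right)
lemma pinner_add_right[simp]: "pinner P c (a + b) = pinner P c a + pinner P c b"
  by (simp add: pinner_def linear_add[OF lin] inner_add_right)
lemma pinner_scaleR_right[simp]: "pinner P c (r *\<^sub>R a) = r * pinner P c a"
  by (simp add: pinner_def linear_cmul[OF lin])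

lemma pinner_commute: "pinner P a b = pinner P b a"
  unfolding pinner_def by (subst selfadjoint) (rule inner_commute)

lemma pinner_ge_zero: "0 \<le> pinner P a a"
  using coercive[of a] dl_pos by (simp add: pinner_def) (smt (verit) inner_ge_zero mult_nonneg_nonneg)

lemma pinner_eq_zero_iff: "pinner P a a = 0 \<longleftrightarrow> a = 0"
proof
  assume "pinner P a a = 0"
  then have "dl * inner a a \<le> 0" using coercive[of a] by (simp add: pinner_def)
  then have "inner a a \<le> 0" using dl_pos by (simp add: mult_le_0_iff)
  then show "a = 0" by (metis inner_ge_zero order_antisym inner_eq_zero_iff)
qed (simp add: pinner_def linear_0[OF lin])

lemma pnorm_power2: "(pnorm P a)\<^sup>2 = pinner P a a"
  by (simp add: pnorm_def pinner_ge_zero)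

lemma bij: "bij P"
proof -
  have "P w = 0 \<Longrightarrow> w = 0" for w
    using pinner_eq_zero_iff[of w] by (simp add: pinner_def)
  then have "inj P"
    using lin by (simp add: linear_injective_0)
  then show ?thesis
    using linear_injective_imp_surjective[OF lin] by (simp add: bij_def)
qed

lemma P_inv [simp]: "P (inv P y) = y"
  using bij by (simp add: bij_is_surj surj_f_inv_f)

lemma inv_P [simp]: "inv P (P y) = y"
  using bij by (simp add: bij_is_inj)

lemma P_inv_diff: "P (inv P a - inv P b) = a - b"
  by (simp add: linear_diff[OF lin])

text \<open>\<open>P \<ge> dl\<close> implies \<open>P\<^sup>2 \<ge> dl P\<close>, via Cauchy-Schwarz.\<close>

lemma inner_P_le_inner_P_P: "dl * inner y (P y) \<le> inner (P y) (P y)"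
proof -
  have "dl * (norm y)\<^sup>2 \<le> norm y * norm (P y)"
    using coercive[of y] Cauchy_Schwarz_ineq2[of y "P y"] by (simp add: power2_norm_eq_inner)
  then have "dl * norm y \<le> norm (P y)"
    by (cases "norm y = 0") (simp_all add: power2_eq_square)
  have "dl * inner y (P y) \<le> dl * (norm y * norm (P y))"
    using Cauchy_Schwarz_ineq2[of y "P y"] dl_pos by (intro mult_left_mono) (auto dest: abs_le_D1)
  also have "\<dots> \<le> norm (P y) * norm (P y)"
    using \<open>dl * norm y \<le> norm (P y)\<close> by (simp add: mult.assoc[symmetric] mult_right_mono)
  also have "\<dots> = inner (P y) (P y)" by (simp add: power2_norm_eq_inner[symmetric] power2_eq_square)
  finally show ?thesis .
qed

lemma p_cocoercive_inv_comp:
  assumes "0 < \<beta>" and coco: "\<And>u v. \<beta> * inner (B u - B v) (B u - B v) \<le> inner (u - v) (B u - B v)"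
  shows "p_cocoercive P (dl * \<beta>) (\<lambda>w. inv P (B w))"
  unfolding p_cocoercive_def
proof (intro allI)
  fix u v
  define y where "y = inv P (B u) - inv P (B v)"
  have Py: "P y = B u - B v" unfolding y_def by (rule P_inv_diff)
  have "dl * \<beta> * pinner P y y = \<beta> * (dl * inner y (P y))" by (simp add: pinner_def)
  also have "\<dots> \<le> \<beta> * inner (P y) (P y)"
    using inner_P_le_inner_P_P \<open>0 < \<beta>\<close> by (simp add: mult_left_mono)
  also have "\<dots> \<le> pinner P (u - v) y" unfolding pinner_def Py by (rule coco)
  finally show "dl * \<beta> * (pnorm P (inv P (B u) - inv P (B v)))\<^sup>2 \<le> pinner P (u - v) y"
    by (simp add: pnorm_power2 y_def)
qed

text \<open>The \<open>\<alpha>\<close>-averaged maps are those with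
  \<open>\<parallel>Tu - Tv\<parallel>\<^sup>2 - 2(1-\<alpha>)\<langle>u - v, Tu - Tv\<rangle> + (1 - 2\<alpha>)\<parallel>u - v\<parallel>\<^sup>2 \<le> 0\<close>;
  the witness is \<open>R = (T - (1-\<alpha>)Id)/\<alpha>\<close>.\<close>

lemma p_averagedI:
  assumes "\<alpha> > 0"
    and ineq: "\<And>u v. pinner P (T u - T v) (T u - T v) - 2 * (1 - \<alpha>) * pinner P (u - v) (T u - T v)
                  + (1 - 2 * \<alpha>) * pinner P (u - v) (u - v) \<le> 0"
  shows "p_averaged P \<alpha> T"
  unfolding p_averaged_def
proof (intro exI conjI allI)
  define R where "R u = (1/\<alpha>) *\<^sub>R (T u - (1 - \<alpha>) *\<^sub>R u)" for u
  show "T u = (1 - \<alpha>) *\<^sub>R u + \<alpha> *\<^sub>R R u" for u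
    using \<open>\<alpha> > 0\<close> by (simp add: R_def)
  show "p_nonexpansive P R"
    unfolding p_nonexpansive_def pnorm_def
  proof (intro allI real_sqrt_le_mono)
    fix u v :: 'a
    define d where "d = u - v"
    define t where "t = T u - T v"
    have "R u - R v = (1/\<alpha>) *\<^sub>R (t - (1 - \<alpha>) *\<^sub>R d)"
      unfolding R_def t_def d_def by (simp add: scaleR_diff_right[symmetric] algebra_simps)
    also have "\<dots> = (1/\<alpha>) *\<^sub>R t + (-(1 - \<alpha>)/\<alpha>) *\<^sub>R d"
      by (simp add: scaleR_diff_right scaleR_minus_left[symmetric] minus_divide_left)
    finally have "R u - R v = (1/\<alpha>) *\<^sub>R t + (-(1 - \<alpha>)/\<alpha>) *\<^sub>R d" .
    then have "pinner P (R u - R v) (R u - R v)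
        = (1/\<alpha>)^2 * (pinner P t t - 2 * (1 - \<alpha>) * pinner P d t + (1 - 2 * \<alpha>) * pinner P d d) + pinner P d d"
      using \<open>\<alpha> > 0\<close> by (simp add: pinner_commute[of t d] field_simps power2_eq_square)
    also have "\<dots> \<le> pinner P d d"
      using ineq[of u v] unfolding d_def[symmetric] t_def[symmetric]
      by (simp add: mult_nonneg_nonpos)
    finally show "pinner P (R u - R v) (R u - R v) \<le> pinner P (u - v) (u - v)" unfolding d_def .
  qed
qed

lemma p_averaged_half_if_firmly_nonexpansive:
  "p_firmly_nonexpansive P T \<Longrightarrow> p_averaged P (1/2) T"
  by (rule p_averagedI) (auto simp: p_firmly_nonexpansive_def)

lemma p_cocoercive_averaged_ineq:
  assumes K: "K > 1/2" and coco: "p_cocoercive P K S"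
  shows "pinner P ((u - S u) - (v - S v)) ((u - S u) - (v - S v))
      - 2 * (1 - 1/(2*K)) * pinner P (u - v) ((u - S u) - (v - S v))
      + (1 - 2 * (1/(2*K))) * pinner P (u - v) (u - v) \<le> 0"
proof -
  define d where "d = u - v"
  define s where "s = S u - S v"
  have diff: "(u - S u) - (v - S v) = d - s" by (simp add: d_def s_def)
  have "K * pinner P s s \<le> pinner P d s"
    using coco unfolding p_cocoercive_def by (simp add: pnorm_power2 d_def s_def)
  have "pinner P (d - s) (d - s) - 2 * (1 - 1/(2*K)) * pinner P d (d - s)
      + (1 - 2 * (1/(2*K))) * pinner P d d = pinner P s s - (1/K) * pinner P d s"
    using K by (simp add: pinner_commute[of s d] field_simps)
  also have "\<dots> \<le> 0" using \<open>K * pinner P s s \<le> pinner P d s\<close> K by (simp add: field_simps)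
  finally show ?thesis unfolding diff d_def[symmetric] .
qed

lemma p_averaged_Id_minus_cocoercive:
  assumes "K > 1/2" and "p_cocoercive P K S"
  shows "p_averaged P (1/(2*K)) (\<lambda>u. u - S u)"
  by (rule p_averagedI) (use assms p_cocoercive_averaged_ineq[OF assms] in auto)

lemma p_averaged_comp_firmly_nonexpansive_Id_minus_cocoercive:
  assumes K: "K > 1/2" and firm: "p_firmly_nonexpansive P T" and coco: "p_cocoercive P K S"
  shows "p_averaged P (2*K/(4*K-1)) (T \<circ> (\<lambda>u. u - S u))"
proof (rule p_averagedI)
  show "0 < 2*K/(4*K-1)" using K by simp
  fix u v :: 'a
  define S' where "S' u = u - S u" for u
  define x where "x = u - v"
  define y where "y = S' u - S' v"
  define z where "z = T (S' u) - T (S' v)"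
  have firm_z: "pinner P z z \<le> pinner P y z"
    using firm unfolding p_firmly_nonexpansive_def y_def z_def by blast
  have avg_y: "pinner P y y - 2 * (1 - 1/(2*K)) * pinner P x y + (1 - 2 * (1/(2*K))) * pinner P x x \<le> 0"
    using p_cocoercive_averaged_ineq[OF K coco, of u v] by (simp add: x_def y_def S'_def)
  have sq: "0 \<le> pinner P ((2*K-1) *\<^sub>R (x - y) - (y - z)) ((2*K-1) *\<^sub>R (x - y) - (y - z))"
    by (rule pinner_ge_zero)
  have sq_eq: "pinner P ((2*K-1) *\<^sub>R (x - y) - (y - z)) ((2*K-1) *\<^sub>R (x - y) - (y - z))
     = (2*K-1)^2*(pinner P x x - 2*pinner P x y + pinner P y y)
       - 2*(2*K-1)*(pinner P x y - pinner P x z - pinner P y y + pinner P y z)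
       + (pinner P y y - 2*pinner P y z + pinner P z z)"
    by (simp add: pinner_commute[of y x] pinner_commute[of z x] pinner_commute[of z y]
        algebra_simps power2_eq_square)
  have "pinner P z z - 2*(1 - 2*K/(4*K-1))*pinner P x z + (1 - 2*(2*K/(4*K-1)))*pinner P x x \<le> 0"
    by (rule averaged_composition_inequality[OF K firm_z avg_y]) (use sq sq_eq in simp)
  then show "pinner P ((T \<circ> (\<lambda>u. u - S u)) u - (T \<circ> (\<lambda>u. u - S u)) v)
                       ((T \<circ> (\<lambda>u. u - S u)) u - (T \<circ> (\<lambda>u. u - S u)) v)
      - 2 * (1 - 2*K/(4*K-1)) * pinner P (u - v) ((T \<circ> (\<lambda>u. u - S u)) u - (T \<circ> (\<lambda>u. u - S u)) v)
      + (1 - 2 * (2*K/(4*K-1))) * pinner P (u - v) (u - v) \<le> 0"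
    by (simp add: x_def z_def S'_def)
qed

lemma resolvent_inv_image_iff: "w \<in> resolvent (\<lambda>w. inv P ` M w) u \<longleftrightarrow> P (u - w) \<in> M w"
proof
  assume "w \<in> resolvent (\<lambda>w. inv P ` M w) u"
  then obtain a where "a \<in> M w" "u = w + inv P a"
    unfolding resolvent_def by auto
  then show "P (u - w) \<in> M w" by simp
next
  assume "P (u - w) \<in> M w"
  moreover have "u = w + inv P (P (u - w))" by simp
  ultimately show "w \<in> resolvent (\<lambda>w. inv P ` M w) u"
    unfolding resolvent_def by blast
qed

context
  fixes M :: "'a \<Rightarrow> 'a set" and T :: "'a \<Rightarrow> 'a"
  assumes monotone: "\<And>w w' a a'. a \<in> M w \<Longrightarrow> a' \<in> M w' \<Longrightarrow> 0 \<le> inner (w - w') (a - a')"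
    and T: "\<And>u. P (u - T u) \<in> M (T u)"
begin

lemma resolvent_inv_image_eq: "resolvent (\<lambda>w. inv P ` M w) u = {T u}"
proof -
  have "w = T u" if "P (u - w) \<in> M w" for w
  proof -
    have "0 \<le> inner (w - T u) (P (u - w) - P (u - T u))"
      using monotone[OF that T] .
    also have "P (u - w) - P (u - T u) = - P (w - T u)"
      by (simp add: linear_diff[OF lin] linear_neg[OF lin, symmetric] algebra_simps)
    finally have "pinner P (w - T u) (w - T u) \<le> 0" by (simp add: pinner_def)
    then show "w = T u"
      using pinner_ge_zero[of "w - T u"] pinner_eq_zero_iff[of "w - T u"] by simp
  qed
  then show ?thesis using T by (auto simp: resolvent_inv_image_iff)
qed

lemma p_firmly_nonexpansive_resolvent: "p_firmly_nonexpansive P T"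
  unfolding p_firmly_nonexpansive_def
proof (intro allI)
  fix u v
  have "0 \<le> inner (T u - T v) (P (u - T u) - P (v - T v))"
    using monotone[OF T T] .
  also have "\<dots> = pinner P (T u - T v) ((u - v) - (T u - T v))"
    unfolding pinner_def by (simp add: linear_diff[OF lin, symmetric] algebra_simps)
  also have "\<dots> = pinner P (T u - T v) (u - v) - pinner P (T u - T v) (T u - T v)"
    by (rule pinner_diff_right)
  finally show "pinner P (T u - T v) (T u - T v) \<le> pinner P (u - v) (T u - T v)"
    by (simp add: pinner_commute)
qed

lemma p_max_monotone_inv_image: "p_max_monotone P (\<lambda>w. inv P ` M w)"
  unfolding p_max_monotone_def p_monotone_def
proof (intro conjI allI impI)
  fix u v a b
  assume "a \<in> inv P ` M u" "b \<in> inv P ` M v"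
  then obtain a' b' where "a' \<in> M u" "b' \<in> M v" "a = inv P a'" "b = inv P b'" by auto
  then show "0 \<le> pinner P (u - v) (a - b)"
    using monotone by (simp add: pinner_def P_inv_diff)
next
  fix u a
  assume max: "\<forall>v b. b \<in> inv P ` M v \<longrightarrow> 0 \<le> pinner P (u - v) (a - b)"
  define w where "w = T (u + a)"
  have w_in: "u + a - w \<in> inv P ` M w"
    using T[of "u + a"] unfolding w_def by (metis image_eqI inv_P)
  then have "0 \<le> pinner P (u - w) (a - (u + a - w))" using max by blast
  then have "pinner P (u - w) (u - w) \<le> 0"
    using pinner_scaleR_right[of "u - w" "-1" "u - w"] by simp
  then have "u = w" using pinner_ge_zero[of "u - w"] pinner_eq_zero_iff[of "u - w"] by simp
  then show "a \<in> inv P ` M u" using w_in by simp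
qed

end

end

lemma PhiOp_linear:
  fixes own :: "'j::finite \<Rightarrow> 'p::finite" and A :: "real^'j^'c::finite" and V :: "'p \<Rightarrow> 'e::finite \<Rightarrow> real"
  shows "linear (PhiOp sig gam tau own A V)"
proof (rule linearI)
  fix a b :: "(real^'c^'p) \<times> (real^'c^'e) \<times> (real^'j^'p)"
  show "PhiOp sig gam tau own A V (a + b) = PhiOp sig gam tau own A V a + PhiOp sig gam tau own A V b"
    by (cases a; cases b) (simp add: PhiOp_def block_operators_linear algebra_simps)
next
  fix r :: real and a :: "(real^'c^'p) \<times> (real^'c^'e) \<times> (real^'j^'p)"
  show "PhiOp sig gam tau own A V (r *\<^sub>R a) = r *\<^sub>R PhiOp sig gam tau own A V a"
    by (cases a) (simp add: PhiOp_def block_operators_linear algebra_simps)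
qed

lemma PhiOp_selfadjoint: "inner u (PhiOp sig gam tau own A V w) = inner (PhiOp sig gam tau own A V u) w"
proof -
  obtain l z x where u: "u = (l, z, x)" by (cases u) auto
  obtain l' z' x' where w: "w = (l', z', x')" by (cases w) auto
  have "inner (Vop V z) l' = inner z (VT V l')" "inner l (Vop V z') = inner (VT V l) z'"
    by (simp_all add: Vop_adjoint) (metis Vop_adjoint inner_commute)
  moreover have "inner (Aop own A (Rop own x)) l' = inner x (RT own (AT own A l'))"
    by (metis Aop_Rop_adjoint inner_commute)
  ultimately show ?thesis
    by (simp add: u w PhiOp_def inner_add_left inner_add_right Aop_Rop_adjoint inner_commute)
qed

lemma normal_cone_monotone:
  assumes "g \<in> normal_cone S y" "g' \<in> normal_cone S y'"
  shows "0 \<le> inner (y - y') (g - g')"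
proof -
  have "y \<in> S" "y' \<in> S" "inner g (y' - y) \<le> 0" "inner g' (y - y') \<le> 0"
    using assms by (auto simp: normal_cone_def split: if_splits)
  then show ?thesis by (simp add: inner_diff inner_commute algebra_simps)
qed

text \<open>The coupling terms of \<open>\<frak>A\<close> form a skew-symmetric operator and cancel.\<close>

lemma frakA_monotone:
  assumes a: "a \<in> frakA own A V Om w" and a': "a' \<in> frakA own A V Om w'"
  shows "0 \<le> inner (w - w') (a - a')"
proof -
  obtain l z x where w: "w = (l, z, x)" by (cases w) auto
  obtain l' z' x' where w': "w' = (l', z', x')" by (cases w') auto
  obtain g where g: "g \<in> normal_cone Om (Rop own x)"
    and a_eq: "a = (- Vop V z - Aop own A (Rop own x), VT V l, RT own g + RT own (AT own A l))"
    using a unfolding w frakA_def by auto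
  obtain g' where g': "g' \<in> normal_cone Om (Rop own x')"
    and a'_eq: "a' = (- Vop V z' - Aop own A (Rop own x'), VT V l', RT own g' + RT own (AT own A l'))"
    using a' unfolding w' frakA_def by auto
  define dl dz dx dg where "dl = l - l'" and "dz = z - z'" and "dx = x - x'" and "dg = g - g'"
  have "a - a' = (- Vop V dz - Aop own A (Rop own dx), VT V dl, RT own dg + RT own (AT own A dl))"
    unfolding a_eq a'_eq dl_def dz_def dx_def dg_def by (simp add: block_operators_linear algebra_simps)
  moreover have "w - w' = (dl, dz, dx)" unfolding w w' dl_def dz_def dx_def by simp
  moreover have "inner dl (Vop V dz) = inner dz (VT V dl)"
    by (metis Vop_adjoint inner_commute)
  moreover have "inner dx (RT own dg) = inner (Rop own dx) dg"
    by (metis RT_adjoint inner_commute)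
  ultimately have "inner (w - w') (a - a') = inner (Rop own dx) dg"
    by (simp add: inner_add_right inner_diff_right Aop_Rop_adjoint RT_adjoint inner_commute)
  also have "\<dots> \<ge> 0"
    unfolding dx_def dg_def linear_diff[OF linear_Rop] by (rule normal_cone_monotone[OF g g'])
  finally show ?thesis .
qed

text \<open>The preconditioner makes the resolvent explicit: \<open>\<lambda>\<close>, then \<open>z\<close>, then \<open>x\<close>
  (through a projection onto \<open>\<Omega>\<close>) are computed in turn.\<close>

lemma frakA_resolvent_exists:
  fixes own :: "'j::finite \<Rightarrow> 'p::finite" and A :: "real^'j^'c::finite" and V :: "'p \<Rightarrow> 'e::finite \<Rightarrow> real"
    and u :: "(real^'c^'p) \<times> (real^'c^'e) \<times> (real^'j^'p)"
  assumes Om: "closed Om" "convex Om" "Om \<noteq> {}"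
    and pos: "sig > 0" "gam > 0" "tau > 0"
  shows "\<exists>w. PhiOp sig gam tau own A V (u - w) \<in> frakA own A V Om w"
proof -
  obtain l0 z0 x0 where u: "u = (l0, z0, x0)" by (cases u) auto
  define l where "l = l0 + sig *\<^sub>R (Vop V z0 + Aop own A (Rop own x0))"
  define z where "z = z0 - gam *\<^sub>R VT V (l + l - l0)"
  define q where "q = AT own A (l + l - l0)"
  define p where "p = Rop own x0 - tau *\<^sub>R q"
  define y where "y = closest_point Om p"
  define x where "x = x0 + RT own (y - Rop own x0)"
  define g where "g = (1/tau) *\<^sub>R (p - y)"
  have Rx: "Rop own x = y" unfolding x_def by (simp add: block_operators_linear Rop_RT)
  have "y \<in> Om" unfolding y_def using closest_point_in_set[OF Om(1,3)] .
  have gN: "g \<in> normal_cone Om (Rop own x)"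
    unfolding Rx normal_cone_def using \<open>y \<in> Om\<close>
  proof (simp, intro ballI)
    fix y' assume "y' \<in> Om"
    have "inner (p - y) (y' - y) \<le> 0"
      unfolding y_def by (rule closest_point_dot[OF Om(2,1) \<open>y' \<in> Om\<close>])
    then show "inner g (y' - y) \<le> 0" unfolding g_def using pos by (simp add: divide_nonpos_pos)
  qed
  have c1: "(1/sig) *\<^sub>R (l0 - l) + Vop V (z0 - z) + Aop own A (Rop own (x0 - x))
      = - Vop V z - Aop own A (Rop own x)"
  proof -
    have "(1/sig) *\<^sub>R (l0 - l) = - (Vop V z0 + Aop own A (Rop own x0))"
      unfolding l_def using pos by simp
    then show ?thesis by (simp add: block_operators_linear)
  qed
  have c2: "VT V (l0 - l) + (1/gam) *\<^sub>R (z0 - z) = VT V l"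
  proof -
    have "(1/gam) *\<^sub>R (z0 - z) = VT V (l + l - l0)"
      unfolding z_def using pos by simp
    then show ?thesis by (simp only: block_operators_linear) (simp add: algebra_simps)
  qed
  have c3: "RT own (AT own A (l0 - l)) + (1/tau) *\<^sub>R (x0 - x) = RT own g + RT own (AT own A l)"
  proof -
    have "(1/tau) *\<^sub>R (x0 - x) = RT own ((1/tau) *\<^sub>R (Rop own x0 - y))"
      unfolding x_def by (simp add: block_operators_linear)
    moreover have "RT own g = RT own ((1/tau) *\<^sub>R (Rop own x0 - y)) - RT own q"
      unfolding g_def p_def using pos by (simp only: block_operators_linear) (simp add: algebra_simps)
    moreover have "RT own q = RT own (AT own A l) + RT own (AT own A l) - RT own (AT own A l0)"
      unfolding q_def by (simp only: block_operators_linear)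
    ultimately show ?thesis by (simp only: block_operators_linear) (simp add: algebra_simps)
  qed
  have "PhiOp sig gam tau own A V (u - (l, z, x)) \<in> frakA own A V Om (l, z, x)"
    unfolding u frakA_def using gN c1 c2 c3 by (auto simp: PhiOp_def)
  then show ?thesis ..
qed

lemma OmegaSet_closed_convex_nonempty:
  fixes own :: "'j::finite \<Rightarrow> 'p::finite"
  assumes blk: "\<forall>i. Omi i \<subseteq> blk own i"
    and cc: "\<forall>i. closed (Omi i) \<and> convex (Omi i)"
    and ne: "\<forall>i. Omi i \<noteq> {}"
  shows "closed (OmegaSet own Omi)" "convex (OmegaSet own Omi)" "OmegaSet own Omi \<noteq> {}"
proof -
  have eq: "OmegaSet own Omi = (\<Inter>i. proj own i -` Omi i)"
    by (auto simp: OmegaSet_def)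
  show "closed (OmegaSet own Omi)" unfolding eq
    using cc
    by (intro closed_INT ballI continuous_closed_vimage linear_continuous_at)
       (auto simp: linear_conv_bounded_linear[symmetric] linear_proj)
  show "convex (OmegaSet own Omi)" unfolding eq
    using cc linear_proj by (intro convex_INT convex_linear_vimage) auto
  have "\<forall>i. \<exists>y. y \<in> Omi i" using ne by blast
  then obtain ys where ys: "\<And>i. ys i \<in> Omi i" by metis
  define y where "y = (\<chi> j. ys (own j) $ j)"
  have "proj own i y = ys i" for i
    using ys[of i] blk unfolding proj_def y_def blk_def by (auto simp: vec_eq_iff)
  then have "y \<in> OmegaSet own Omi" using ys by (simp add: OmegaSet_def)
  then show "OmegaSet own Omi \<noteq> {}" by auto
qed

theorem lemma4:
  fixes own :: "'j::finite \<Rightarrow> 'p::finite"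
    and Omi :: "'p \<Rightarrow> (real^'j) set"
    and f :: "'p \<Rightarrow> real^'j \<Rightarrow> real"
    and gf :: "'p \<Rightarrow> real^'j \<Rightarrow> real^'j"
    and A :: "real^'j^'c::finite"
    and b :: "real^'c^'p"
    and tle hde :: "'e::finite \<Rightarrow> 'p"
    and chibar betaE delta sig gam tau :: real
  assumes Omi_blk: "\<forall>i. Omi i \<subseteq> blk own i"
    and Omi_cc: "\<forall>i. closed (Omi i) \<and> convex (Omi i)"
    and Omi_int: "\<forall>i. \<exists>y\<in>Omi i. \<exists>e>0. ball y e \<inter> blk own i \<subseteq> Omi i"
    and X_ri: "rel_interior (Xset own Omi A b) \<noteq> {}"
    and slice_ri: "\<forall>i x. slice own Omi A b i x \<noteq> {} \<longrightarrow> rel_interior (slice own Omi A b i x) \<noteq> {}"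
    and f_convex: "\<forall>i x. convex_on (blk own i) (\<lambda>u. f i (replace_blk own i x u))"
    and gf_blk: "\<forall>i x. gf i x \<in> blk own i"
    and f_grad: "\<forall>i x. ((\<lambda>u. f i (replace_blk own i x u)) has_derivative (\<lambda>h. inner (gf i x) h))
                          (at (proj own i x) within blk own i)"
    and gf_cont: "\<forall>i x. continuous_on (blk own i) (\<lambda>u. gf i (replace_blk own i x u))"
    and no_loops: "\<forall>e. tle e \<noteq> hde e"
    and simple: "inj (\<lambda>e. {tle e, hde e})"
    and conn: "connected_graph tle hde"
    and chi_pos: "chibar > 0"
    and asm4: "\<forall>x x'. chibar * (norm (Fop own gf x - Fop own gf x'))\<^sup>2
                   \<le> inner (x - x') (RT own (Fop own gf x) - RT own (Fop own gf x'))"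
    and beta_pos: "0 < betaE"
    and beta_lt: "betaE < 1/2 * min chibar (1 / (2 * dstar (incid tle hde)))"
    and delta_gt: "delta > 1 / (2 * betaE)"
    and sig_pos: "sig > 0" and gam_pos: "gam > 0" and tau_pos: "tau > 0"
    and Phi_psd: "psd (\<lambda>W. PhiOp sig gam tau own A (incid tle hde) W - delta *\<^sub>R W)"
  shows "p_max_monotone (PhiOp sig gam tau own A (incid tle hde))
           (\<lambda>W. inv (PhiOp sig gam tau own A (incid tle hde)) `
                  frakA own A (incid tle hde) (OmegaSet own Omi) W)
       \<and> (\<exists>T1. (\<forall>u. resolvent (\<lambda>W. inv (PhiOp sig gam tau own A (incid tle hde)) `
                                  frakA own A (incid tle hde) (OmegaSet own Omi) W) u = {T1 u})
              \<and> p_averaged (PhiOp sig gam tau own A (incid tle hde)) (1/2) T1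
              \<and> p_cocoercive (PhiOp sig gam tau own A (incid tle hde)) (delta * betaE)
                  (\<lambda>W. inv (PhiOp sig gam tau own A (incid tle hde)) (frakB own gf (incid tle hde) b W))
              \<and> p_averaged (PhiOp sig gam tau own A (incid tle hde)) (1 / (2 * delta * betaE))
                  (\<lambda>W. W - inv (PhiOp sig gam tau own A (incid tle hde)) (frakB own gf (incid tle hde) b W))
              \<and> p_averaged (PhiOp sig gam tau own A (incid tle hde))
                  (2 * delta * betaE / (4 * delta * betaE - 1))
                  (T1 \<circ> (\<lambda>W. W - inv (PhiOp sig gam tau own A (incid tle hde)) (frakB own gf (incid tle hde) b W))))"
proof -
  let ?V = "incid tle hde"
  let ?P = "PhiOp sig gam tau own A ?V"
  let ?M = "frakA own A ?V (OmegaSet own Omi)"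
  let ?B = "frakB own gf ?V b"
  have "delta > 0" using delta_gt beta_pos by (smt (verit) divide_pos_pos)
  moreover have "delta * inner w w \<le> inner w (?P w)" for w
    using Phi_psd[unfolded psd_def, rule_format, of w] by (simp add: inner_diff_right)
  ultimately interpret selfadjoint_coercive ?P delta
    by (rule selfadjoint_coercive.intro[OF PhiOp_linear PhiOp_selfadjoint])
  have "\<forall>i. Omi i \<noteq> {}" using Omi_int by auto
  then obtain T1 where T1: "\<And>u. ?P (u - T1 u) \<in> ?M (T1 u)"
    using frakA_resolvent_exists[OF OmegaSet_closed_convex_nonempty[OF Omi_blk Omi_cc]
        sig_pos gam_pos tau_pos] by metis
  have firm: "p_firmly_nonexpansive ?P T1"
    by (rule p_firmly_nonexpansive_resolvent[OF frakA_monotone T1])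
  have K: "delta * betaE > 1/2" using delta_gt beta_pos by (simp add: field_simps)
  have coco: "p_cocoercive ?P (delta * betaE) (\<lambda>W. inv ?P (?B W))"
    using step_size_bounds[OF beta_pos beta_lt]
    by (intro p_cocoercive_inv_comp beta_pos frakB_cocoercive[OF no_loops asm4 beta_pos])
  show ?thesis
    using p_max_monotone_inv_image[OF frakA_monotone T1] resolvent_inv_image_eq[OF frakA_monotone T1]
      p_averaged_half_if_firmly_nonexpansive[OF firm] coco
      p_averaged_Id_minus_cocoercive[OF K coco]
      p_averaged_comp_firmly_nonexpansive_Id_minus_cocoercive[OF K firm coco]
    by (auto simp: mult.assoc)
qed

end
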